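(* Let $\alpha\in(d-1,d]$. There exist constants $C_1=C_1(d)>0$ and $C_2=C_2(d,\alpha)>0$ such that for every bounded set $A\subset\mathbb{R}^d$ with $\mathcal{H}^{\alpha}(A)<a$ (where $a>0$) and every $\varepsilon>0$ there exists a supercovering $\mathfrak{B}$ of $A$ such that: 1) the center of every ball of $\mathfrak{B}$ lies in $A$ and its radius does not exceed $\varepsilon$; 2) $\mathfrak{B}$ can be split into $C_1$ subfamilies $\mathfrak{B}^1,\ldots,\mathfrak{B}^{C_1}$, each of which is a disjoint family of balls, satisfying $$\sum_{B_{r_i}(x_i)\in\mathfrak{B}^j} r_i^{\alpha}\leq C_2 a,\qquad j=1,2,\ldots,C_1.$$
   Context: A family $\mathfrak{B}$ of open Euclidean balls is called a supercovering of a set $A\subset\mathbb{R}^d$ if $A\subset\bigcup_{B_{r_j}(x_j)\in\mathfrak{B}} B_{r_j/3}(x_j)$, where $B_r(x)$ is the open ball of radius $r$ centered at $x$. A disjoint family of balls is one in which no two balls intersect. $\mathcal{H}^\alpha$ is the $\alpha$-dimensional Hausdorff measure. *)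

theory Defs
  imports "HOL-Analysis.Analysis"
begin

definition hausdorff_const :: "real \<Rightarrow> real" where
  "hausdorff_const \<alpha> = pi powr (\<alpha> / 2) / Gamma (\<alpha> / 2 + 1)"

definition hausdorff_pre :: "real \<Rightarrow> real \<Rightarrow> 'a::euclidean_space set \<Rightarrow> ennreal" where
  "hausdorff_pre \<alpha> \<delta> A =
     (INF C \<in> {C :: nat \<Rightarrow> 'a set. A \<subseteq> (\<Union>i. C i) \<and>
                 (\<forall>i. bounded (C i) \<and> diameter (C i) \<le> \<delta>)}.
        (\<Sum>i. ennreal (hausdorff_const \<alpha> * (diameter (C i) / 2) powr \<alpha>)))"

definition hausdorff_measure :: "real \<Rightarrow> 'a::euclidean_space set \<Rightarrow> ennreal" where
  "hausdorff_measure \<alpha> A = (SUP \<delta> \<in> {0<..}. hausdorff_pre \<alpha> \<delta> A)"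

text \<open>A family of balls is represented as a set of (centre, radius) pairs.\<close>

definition supercovering :: "('a::metric_space \<times> real) set \<Rightarrow> 'a set \<Rightarrow> bool" where
  "supercovering \<B> A \<longleftrightarrow> A \<subseteq> (\<Union>(x, r) \<in> \<B>. ball x (r / 3))"

definition disjoint_balls :: "('a::metric_space \<times> real) set \<Rightarrow> bool" where
  "disjoint_balls \<B> \<longleftrightarrow>
     (\<forall>p\<in>\<B>. \<forall>q\<in>\<B>. p \<noteq> q \<longrightarrow> ball (fst p) (snd p) \<inter> ball (fst q) (snd q) = {})"

end

(*
  Since H^alpha(A) < a, the set A is covered by cubes Q_i of half-sides R_i with
  sum R_i^alpha <= C a.  The scale s(y) = sup_i min (R_i, depth_i(y) / 12d), where depth_i(y) is
  the sup-norm distance from y to the complement of Q_i, is positive on A and (1/12d)-Lipschitz.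
  A point y gets the dyadic level k with t_k <= s(y) < 2 t_k; for every cube of the grid of mesh
  t_k that contains a point of A of level k we keep one such point and the ball of radius 3d t_k
  around it.  The balls of a third of that radius already cover A.  Points closer than 6d t_k
  have levels differing by at most one, so colouring a cell by its level mod 3 and its grid
  position mod 6d+1 makes balls of equal colour disjoint.

  For the alpha-sums a cell of level k is charged to a cube Q_i realising s up to a factor 2.
  Then t_k < 2 R_i and the cell lies within 24d grid steps of the boundary of Q_i, so Q_i is
  charged with O((R_i / t_k)^(d-1)) cells of level k.  Summing (R_i / t_k)^(d-1) t_k^alpha over
  the dyadic t_k < 2 R_i gives a geometric series, convergent exactly because alpha > d - 1, with
  sum O(R_i^alpha).
*)

theory Submission
  imports Defs
begin

lemma powr_add_le_two_powr:
  fixes x y \<alpha> :: real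
  assumes "0 \<le> x" "0 \<le> y" "0 \<le> \<alpha>"
  shows "(x + y) powr \<alpha> \<le> 2 powr \<alpha> * (x powr \<alpha> + y powr \<alpha>)"
proof -
  have "(x + y) powr \<alpha> \<le> (2 * max x y) powr \<alpha>"
    using assms by (intro powr_mono2) auto
  also have "\<dots> = 2 powr \<alpha> * max x y powr \<alpha>"
    using assms by (simp add: powr_mult)
  also have "max x y powr \<alpha> \<le> x powr \<alpha> + y powr \<alpha>"
    by (cases "x \<le> y") (auto simp: max_def)
  finally show ?thesis by simp
qed

lemma sum_power_half_Suc_le_1:
  assumes "finite I"
  shows "(\<Sum>i\<in>I. (1/2::real) ^ Suc i) \<le> 1"
proof -
  obtain N where "I \<subseteq> {..<N}"
    using assms by (meson finite_nat_iff_bounded)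
  then have "(\<Sum>i\<in>I. (1/2::real) ^ Suc i) \<le> (\<Sum>i<N. (1/2) ^ Suc i)"
    by (intro sum_mono2) auto
  also have "\<dots> = 1 - (1/2) ^ N"
    by (induction N) auto
  also have "\<dots> \<le> 1"
    by simp
  finally show ?thesis .
qed

lemma exists_slack_sum_powr_le:
  fixes \<alpha> a \<tau> :: real
  assumes "0 < \<alpha>" "0 < a" "0 < \<tau>"
  shows "\<exists>\<eta> :: nat \<Rightarrow> real. (\<forall>i. 0 < \<eta> i \<and> \<eta> i \<le> \<tau>) \<and> (\<forall>I. finite I \<longrightarrow> (\<Sum>i\<in>I. \<eta> i powr \<alpha>) \<le> a)"
proof -
  define \<eta> where "\<eta> i = min \<tau> ((a * (1/2) ^ Suc i) powr (1 / \<alpha>))" for i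
  have \<eta>_pos: "0 < \<eta> i" for i
    unfolding \<eta>_def using assms(2,3) by auto
  have \<eta>_powr: "\<eta> i powr \<alpha> \<le> a * (1/2) ^ Suc i" for i
  proof -
    have "\<eta> i powr \<alpha> \<le> ((a * (1/2) ^ Suc i) powr (1 / \<alpha>)) powr \<alpha>"
      using \<eta>_pos[of i] assms(1) unfolding \<eta>_def by (intro powr_mono2) auto
    also have "\<dots> = a * (1/2) ^ Suc i"
      using assms(1,2) by (simp add: powr_powr)
    finally show ?thesis .
  qed
  have "(\<Sum>i\<in>I. \<eta> i powr \<alpha>) \<le> a" if "finite I" for I
  proof -
    have "(\<Sum>i\<in>I. \<eta> i powr \<alpha>) \<le> a * (\<Sum>i\<in>I. (1/2) ^ Suc i)"
      unfolding sum_distrib_left by (intro sum_mono \<eta>_powr)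
    also have "\<dots> \<le> a"
      using sum_power_half_Suc_le_1[OF that] assms(2) by (simp add: mult_left_le)
    finally show ?thesis .
  qed
  moreover have "\<eta> i \<le> \<tau>" for i
    unfolding \<eta>_def by simp
  ultimately show ?thesis
    using \<eta>_pos by blast
qed

lemma halving_powr_telescoping:
  fixes t r \<beta> :: real
  assumes "t > 0" "\<beta> > 0"
  shows "(if t < r then t powr \<beta> else 0) * (1 - 2 powr - \<beta>)
    \<le> min (r powr \<beta>) (t powr \<beta>) - min (r powr \<beta>) ((t / 2) powr \<beta>)"
proof -
  have half_powr: "(t / 2) powr \<beta> = 2 powr - \<beta> * t powr \<beta>"
    using assms(1) by (simp add: powr_divide powr_minus_divide)
  show ?thesis
  proof (cases "t < r")
    case True
    then have "t powr \<beta> < r powr \<beta>" "(t / 2) powr \<beta> < r powr \<beta>"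
      using assms by (auto intro: powr_less_mono2)
    then show ?thesis
      using True half_powr by (simp add: algebra_simps)
  next
    case False
    have "(t / 2) powr \<beta> \<le> t powr \<beta>"
      using assms by (intro powr_mono2) auto
    then show ?thesis
      using False by (simp add: min.coboundedI2)
  qed
qed

lemma sum_dyadic_powr_le:
  fixes T r \<beta> :: real
  assumes "T > 0" "\<beta> > 0" "finite L"
  shows "(\<Sum>k\<in>L. if T / 2 ^ k < r then (T / 2 ^ k) powr \<beta> else 0) \<le> r powr \<beta> / (1 - 2 powr - \<beta>)"
proof -
  define g where "g k = (if T / 2 ^ k < r then (T / 2 ^ k) powr \<beta> else 0)" for k :: nat
  define h where "h k = min (r powr \<beta>) ((T / 2 ^ k) powr \<beta>)" for k :: nat
  have q_less_1: "2 powr - \<beta> < 1"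
    using assms(2) by (simp add: powr_less_one)
  obtain N where "L \<subseteq> {..<N}"
    using assms(3) by (meson finite_nat_iff_bounded)
  then have "(\<Sum>k\<in>L. g k) * (1 - 2 powr - \<beta>) \<le> (\<Sum>k<N. g k) * (1 - 2 powr - \<beta>)"
    using q_less_1 unfolding g_def by (intro mult_right_mono sum_mono2) auto
  also have "\<dots> \<le> (\<Sum>k<N. h k - h (Suc k))"
    unfolding sum_distrib_right
  proof (rule sum_mono)
    show "g k * (1 - 2 powr - \<beta>) \<le> h k - h (Suc k)" for k
      using halving_powr_telescoping[of "T / 2 ^ k" \<beta> r] assms(1,2) unfolding g_def h_def
      by (simp add: mult.commute)
  qed
  also have "\<dots> = h 0 - h N"
    by (rule sum_lessThan_telescope')
  also have "\<dots> \<le> r powr \<beta>"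
    unfolding h_def by (smt (verit) min.cobounded1 powr_ge_zero)
  finally show ?thesis
    using q_less_1 unfolding g_def by (simp add: pos_le_divide_eq)
qed

lemma sum_le_of_suminf_ennreal_le:
  fixes f :: "nat \<Rightarrow> real"
  assumes "\<And>i. 0 \<le> f i" "(\<Sum>i. ennreal (f i)) \<le> ennreal a" "0 \<le> a" "finite I"
  shows "(\<Sum>i\<in>I. f i) \<le> a"
proof -
  have "ennreal (\<Sum>i\<in>I. f i) = (\<Sum>i\<in>I. ennreal (f i))"
    using assms(1) by (simp add: sum_ennreal)
  also have "\<dots> \<le> (\<Sum>i. ennreal (f i))"
    using assms(4) by (intro sum_le_suminf) auto
  also have "\<dots> \<le> ennreal a"
    by (rule assms(2))
  finally show ?thesis
    using assms(3) by simp
qed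

lemma infsum_ennreal_le_if_sums_le:
  assumes "\<And>x. x \<in> X \<Longrightarrow> 0 \<le> f x" "\<And>G. finite G \<Longrightarrow> G \<subseteq> X \<Longrightarrow> (\<Sum>x\<in>G. f x) \<le> b"
  shows "(\<Sum>\<^sub>\<infinity>x\<in>X. ennreal (f x)) \<le> ennreal b"
proof (rule infsum_le_finite_sums)
  show "(\<lambda>x. ennreal (f x)) summable_on X"
    by (rule nonneg_summable_on_complete) simp
  fix G assume "finite G" "G \<subseteq> X"
  then show "(\<Sum>x\<in>G. ennreal (f x)) \<le> ennreal b"
    using assms by (subst sum_ennreal) (auto intro: ennreal_leI)
qed

section \<open>Integer grids\<close>

lemma card_floor_interval_le:
  fixes u v :: real
  assumes "u \<le> v"
  shows "real (card {\<lfloor>u\<rfloor>..\<lfloor>v\<rfloor>}) \<le> v - u + 2"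
proof -
  have "\<lfloor>u\<rfloor> \<le> \<lfloor>v\<rfloor>"
    using assms by (rule floor_mono)
  then show ?thesis
    by simp linarith
qed

lemma floor_divide_mem_near_ends:
  fixes lo hi x t :: real and m :: int
  assumes "t > 0" "lo \<le> x" "x \<le> hi" "x - lo \<le> m * t \<or> hi - x \<le> m * t"
  shows "\<lfloor>x / t\<rfloor> \<in> {\<lfloor>lo / t\<rfloor>..\<lfloor>lo / t\<rfloor> + m} \<union> {\<lfloor>hi / t\<rfloor> - m..\<lfloor>hi / t\<rfloor>}"
proof -
  have bounds: "\<lfloor>lo / t\<rfloor> \<le> \<lfloor>x / t\<rfloor>" "\<lfloor>x / t\<rfloor> \<le> \<lfloor>hi / t\<rfloor>"
    using assms(1-3) by (auto intro!: floor_mono divide_right_mono)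
  from assms(4) show ?thesis
  proof
    assume "x - lo \<le> m * t"
    then have "x / t \<le> lo / t + m"
      using assms(1) by (simp add: field_simps)
    then have "\<lfloor>x / t\<rfloor> \<le> \<lfloor>lo / t\<rfloor> + m"
      by (metis floor_add_int floor_mono)
    with bounds show ?thesis by auto
  next
    assume "hi - x \<le> m * t"
    then have "(hi - m * t) / t \<le> x / t"
      using assms(1) by (intro divide_right_mono) auto
    then have "hi / t - m \<le> x / t"
      using assms(1) by (simp add: diff_divide_distrib)
    then have "\<lfloor>hi / t\<rfloor> - m \<le> \<lfloor>x / t\<rfloor>"
      by (metis floor_diff_of_int floor_mono)
    with bounds show ?thesis by auto
  qed
qed

lemma card_PiE_update_le:
  fixes q :: real
  assumes "finite I" "i \<in> I" "\<And>j. j \<in> I \<Longrightarrow> real (card (S j)) \<le> q"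
  shows "real (card (PiE I (\<lambda>j. if j = i then T else S j))) \<le> real (card T) * q ^ (card I - 1)"
proof -
  have "real (card (PiE I (\<lambda>j. if j = i then T else S j)))
      = real (card T) * (\<Prod>j\<in>I - {i}. real (card (if j = i then T else S j)))"
    using assms(1,2) by (simp add: card_PiE prod.remove)
  also have "(\<Prod>j\<in>I - {i}. real (card (if j = i then T else S j))) = (\<Prod>j\<in>I - {i}. real (card (S j)))"
    by (rule prod.cong) auto
  also have "(\<Prod>j\<in>I - {i}. real (card (S j))) \<le> (\<Prod>j\<in>I - {i}. q)"
    using assms(3) by (intro prod_mono) auto
  also have "\<dots> = q ^ (card I - 1)"
    using assms(1,2) by simp
  finally show ?thesis
    by (simp add: mult_left_mono)
qed

lemma partition_by_finite_colouring:
  assumes "finite K" "f ` X \<subseteq> K" "inj_on g X"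
  obtains Bs :: "nat \<Rightarrow> 'b set" where "g ` X = (\<Union>j<card K. Bs j)"
    "\<And>i j. i < card K \<Longrightarrow> j < card K \<Longrightarrow> i \<noteq> j \<Longrightarrow> Bs i \<inter> Bs j = {}"
    "\<And>j. \<exists>\<kappa>. Bs j = g ` {x \<in> X. f x = \<kappa>}"
proof -
  obtain h where h: "bij_betw h {..<card K} K"
    using ex_bij_betw_nat_finite[OF assms(1)] by (auto simp: atLeast0LessThan)
  define Bs where "Bs j = g ` {x \<in> X. f x = h j}" for j
  have "g ` X \<subseteq> (\<Union>j<card K. Bs j)"
  proof
    fix y assume "y \<in> g ` X"
    then obtain x where "x \<in> X" "y = g x"
      by blast
    moreover obtain j where "j < card K" "f x = h j"
      using \<open>x \<in> X\<close> assms(2) bij_betw_imp_surj_on[OF h] by (metis image_iff image_subset_iff lessThan_iff)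
    ultimately show "y \<in> (\<Union>j<card K. Bs j)"
      unfolding Bs_def by blast
  qed
  moreover have "(\<Union>j<card K. Bs j) \<subseteq> g ` X"
    unfolding Bs_def by blast
  moreover have "Bs i \<inter> Bs j = {}" if "i < card K" "j < card K" "i \<noteq> j" for i j
  proof -
    have "h i \<noteq> h j"
      using that bij_betw_imp_inj_on[OF h] by (auto dest: inj_onD)
    then show ?thesis
      unfolding Bs_def using inj_onD[OF assms(3)] by fastforce
  qed
  moreover have "\<exists>\<kappa>. Bs j = g ` {x \<in> X. f x = \<kappa>}" for j
    unfolding Bs_def by blast
  ultimately show ?thesis
    using that by (meson subset_antisym)
qed

lemma real_DIM_ge_1: "1 \<le> real DIM('a::euclidean_space)"
  using DIM_positive[where 'a = 'a] by linarith

definition grid_index :: "real \<Rightarrow> 'a::euclidean_space \<Rightarrow> 'a \<Rightarrow> int" where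
  "grid_index t y = restrict (\<lambda>b. \<lfloor>(y \<bullet> b) / t\<rfloor>) Basis"

lemma norm_diff_less_of_grid_index_eq:
  fixes x y :: "'a::euclidean_space" and t :: real
  assumes "t > 0" and eq: "grid_index t x = grid_index t y"
  shows "norm (x - y) < real DIM('a) * t"
proof -
  have "\<bar>(x - y) \<bullet> b\<bar> < t" if b: "b \<in> Basis" for b
  proof -
    have "\<lfloor>(x \<bullet> b) / t\<rfloor> = \<lfloor>(y \<bullet> b) / t\<rfloor>"
      using fun_cong[OF eq, of b] b unfolding grid_index_def by simp
    then have "\<bar>(x \<bullet> b) / t - (y \<bullet> b) / t\<bar> < 1"
      by linarith
    also have "(x \<bullet> b) / t - (y \<bullet> b) / t = ((x - y) \<bullet> b) / t"
      by (simp add: inner_diff_left diff_divide_distrib)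
    finally show ?thesis
      using assms(1) by (simp add: abs_divide)
  qed
  then have "(\<Sum>b\<in>Basis. \<bar>(x - y) \<bullet> b\<bar>) < (\<Sum>b\<in>(Basis::'a set). t)"
    by (intro sum_strict_mono) auto
  then show ?thesis
    using norm_le_l1[of "x - y"] by simp
qed

lemma norm_diff_gt_of_grid_index_far:
  fixes x y :: "'a::euclidean_space"
  assumes "t > 0" "b \<in> Basis" "m \<le> \<bar>grid_index t x b - grid_index t y b\<bar>"
  shows "(of_int m - 1) * t < norm (x - y)"
proof -
  have "m \<le> \<bar>\<lfloor>(x \<bullet> b) / t\<rfloor> - \<lfloor>(y \<bullet> b) / t\<rfloor>\<bar>"
    using assms(2,3) unfolding grid_index_def by simp
  then have "of_int m - 1 < \<bar>(x \<bullet> b) / t - (y \<bullet> b) / t\<bar>"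
    by linarith
  also have "\<dots> = \<bar>(x - y) \<bullet> b\<bar> / t"
    using assms(1) by (simp add: inner_diff_left abs_divide flip: diff_divide_distrib)
  finally have "(of_int m - 1) * t < \<bar>(x - y) \<bullet> b\<bar>"
    using assms(1) by (simp add: field_simps)
  also have "\<dots> \<le> norm (x - y)"
    using assms(2) by (rule Basis_le_norm)
  finally show ?thesis .
qed

section \<open>Covering by cubes\<close>

lemma hausdorff_const_pos: "\<alpha> > 0 \<Longrightarrow> hausdorff_const \<alpha> > 0"
  unfolding hausdorff_const_def by (auto intro!: divide_pos_pos Gamma_real_pos)

definition cube :: "'a::euclidean_space \<Rightarrow> real \<Rightarrow> 'a set" where
  "cube c r = {y. \<forall>b\<in>Basis. \<bar>(y - c) \<bullet> b\<bar> < r}"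

lemma subset_cube_if_diameter_less:
  assumes "bounded C" "x \<in> C" "diameter C < r"
  shows "C \<subseteq> cube x r"
proof
  fix y assume "y \<in> C"
  have "\<bar>(y - x) \<bullet> b\<bar> < r" if "b \<in> Basis" for b
  proof -
    have "\<bar>(y - x) \<bullet> b\<bar> \<le> norm (y - x)"
      using that by (rule Basis_le_norm)
    also have "\<dots> \<le> diameter C"
      using diameter_bounded_bound[OF assms(1) \<open>y \<in> C\<close> assms(2)] by (simp add: dist_norm)
    finally show ?thesis
      using assms(3) by linarith
  qed
  then show "y \<in> cube x r"
    unfolding cube_def by blast
qed

lemma hausdorff_measure_less_imp_cover:
  assumes "hausdorff_measure \<alpha> A < ennreal a" "\<delta> > 0"
  obtains C :: "nat \<Rightarrow> 'a::euclidean_space set"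
  where "A \<subseteq> (\<Union>i. C i)" "\<And>i. bounded (C i)" "\<And>i. diameter (C i) \<le> \<delta>"
    "(\<Sum>i. ennreal (hausdorff_const \<alpha> * (diameter (C i) / 2) powr \<alpha>)) < ennreal a"
proof -
  have "hausdorff_pre \<alpha> \<delta> A \<le> hausdorff_measure \<alpha> A"
    unfolding hausdorff_measure_def using assms(2) by (intro SUP_upper) auto
  with assms(1) have "hausdorff_pre \<alpha> \<delta> A < ennreal a"
    by simp
  with that show ?thesis
    unfolding hausdorff_pre_def by (auto simp: INF_less_iff)
qed

definition cube_cover_const :: "real \<Rightarrow> real" where
  "cube_cover_const \<alpha> = 2 powr \<alpha> * (2 powr \<alpha> / hausdorff_const \<alpha> + 1)"

lemma cube_cover_const_pos: "\<alpha> > 0 \<Longrightarrow> cube_cover_const \<alpha> > 0"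
  unfolding cube_cover_const_def using hausdorff_const_pos[of \<alpha>] by (simp add: add_pos_pos)

lemma cube_cover_of_hausdorff_measure_less:
  fixes A :: "'a::euclidean_space set"
  assumes "\<alpha> > 0" "a > 0" "\<tau> > 0" "hausdorff_measure \<alpha> A < ennreal a"
  obtains c :: "nat \<Rightarrow> 'a" and R where "A \<subseteq> (\<Union>i. cube (c i) (R i))"
    "\<And>i. 0 \<le> R i" "\<And>i. R i \<le> \<tau>"
    "\<And>I. finite I \<Longrightarrow> (\<Sum>i\<in>I. R i powr \<alpha>) \<le> cube_cover_const \<alpha> * a"
proof -
  define hc where "hc = hausdorff_const \<alpha>"
  have hc_pos: "hc > 0"
    unfolding hc_def using assms(1) by (rule hausdorff_const_pos)
  obtain C :: "nat \<Rightarrow> 'a set" where C_cover: "A \<subseteq> (\<Union>i. C i)" and C_bounded: "\<And>i. bounded (C i)"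
    and C_diameter: "\<And>i. diameter (C i) \<le> \<tau> / 2"
    and C_sum: "(\<Sum>i. ennreal (hc * (diameter (C i) / 2) powr \<alpha>)) < ennreal a"
    using hausdorff_measure_less_imp_cover[OF assms(4), of "\<tau> / 2"] assms(3) unfolding hc_def by auto
  obtain \<eta> :: "nat \<Rightarrow> real" where \<eta>: "\<forall>i. 0 < \<eta> i \<and> \<eta> i \<le> \<tau> / 2"
    and \<eta>_sum: "\<forall>I. finite I \<longrightarrow> (\<Sum>i\<in>I. \<eta> i powr \<alpha>) \<le> a"
    using exists_slack_sum_powr_le[OF assms(1,2) half_gt_zero[OF assms(3)]] by blast
  define D where "D i = diameter (C i)" for i
  define c where "c i = (SOME y. y \<in> C i)" for i
  define R where "R i = D i + \<eta> i" for i
  have D_nonneg: "0 \<le> D i" for i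
    unfolding D_def using C_bounded by (simp add: diameter_ge_0)
  have "A \<subseteq> (\<Union>i. cube (c i) (R i))"
  proof
    fix y assume "y \<in> A"
    then obtain i where "y \<in> C i"
      using C_cover by auto
    then have "c i \<in> C i"
      unfolding c_def by (rule someI)
    then have "C i \<subseteq> cube (c i) (R i)"
      using C_bounded \<eta> unfolding R_def D_def by (intro subset_cube_if_diameter_less) auto
    with \<open>y \<in> C i\<close> show "y \<in> (\<Union>i. cube (c i) (R i))"
      by auto
  qed
  moreover have "(\<Sum>i\<in>I. R i powr \<alpha>) \<le> cube_cover_const \<alpha> * a" if "finite I" for I
  proof -
    have sum_D: "(\<Sum>i\<in>I. D i powr \<alpha>) \<le> (2 powr \<alpha> / hc) * a"
    proof -
      have "(\<Sum>i\<in>I. D i powr \<alpha>) = (2 powr \<alpha> / hc) * (\<Sum>i\<in>I. hc * (D i / 2) powr \<alpha>)"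
        using hc_pos D_nonneg by (simp add: sum_distrib_left powr_divide)
      also have "\<dots> \<le> (2 powr \<alpha> / hc) * a"
        using C_sum hc_pos assms(2) \<open>finite I\<close> unfolding D_def
        by (intro mult_left_mono sum_le_of_suminf_ennreal_le) auto
      finally show ?thesis .
    qed
    have "(\<Sum>i\<in>I. R i powr \<alpha>) \<le> (\<Sum>i\<in>I. 2 powr \<alpha> * (D i powr \<alpha> + \<eta> i powr \<alpha>))"
      unfolding R_def using D_nonneg \<eta> assms(1) by (intro sum_mono powr_add_le_two_powr) (auto intro: less_imp_le)
    also have "\<dots> = 2 powr \<alpha> * ((\<Sum>i\<in>I. D i powr \<alpha>) + (\<Sum>i\<in>I. \<eta> i powr \<alpha>))"
      by (simp add: distrib_left sum.distrib sum_distrib_left)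
    also have "\<dots> \<le> 2 powr \<alpha> * ((2 powr \<alpha> / hc) * a + a)"
      using sum_D \<eta>_sum \<open>finite I\<close> by (intro mult_left_mono add_mono) auto
    also have "\<dots> = cube_cover_const \<alpha> * a"
      unfolding cube_cover_const_def hc_def by (simp add: algebra_simps)
    finally show ?thesis .
  qed
  moreover have "0 \<le> R i" "R i \<le> \<tau>" for i
    using D_nonneg[of i] \<eta>[rule_format, of i] C_diameter[of i] unfolding R_def D_def by linarith+
  ultimately show ?thesis
    using that by blast
qed

section \<open>Dyadic cells adapted to a cube cover\<close>

locale cube_cover =
  fixes A :: "'a::euclidean_space set" and c :: "nat \<Rightarrow> 'a" and R :: "nat \<Rightarrow> real" and \<epsilon> :: real
  assumes eps_pos: "0 < \<epsilon>"
    and R_nonneg: "\<And>i. 0 \<le> R i"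
    and R_le: "\<And>i. R i \<le> \<epsilon> / (3 * real DIM('a))"
    and A_subset_cubes: "A \<subseteq> (\<Union>i. cube (c i) (R i))"
begin

definition mesh :: "nat \<Rightarrow> real" where
  "mesh k = \<epsilon> / (3 * real DIM('a) * 2 ^ k)"

lemma mesh_pos: "0 < mesh k"
  unfolding mesh_def using eps_pos by simp

lemma mesh_eq: "mesh k = mesh 0 / 2 ^ k"
  unfolding mesh_def by simp

lemma mesh_Suc: "mesh (Suc k) = mesh k / 2"
  unfolding mesh_def by simp

lemma mesh_antimono: "j \<le> k \<Longrightarrow> mesh k \<le> mesh j"
  unfolding mesh_def using eps_pos by (intro divide_left_mono) (auto intro: power_increasing)

lemma inj_mesh: "inj mesh"
  unfolding mesh_def inj_def using eps_pos by (auto simp: power_inject_exp)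

lemma R_le_mesh_0: "R i \<le> mesh 0"
  unfolding mesh_def using R_le by simp

definition depth :: "nat \<Rightarrow> 'a \<Rightarrow> real" where
  "depth i y = Min ((\<lambda>b. R i - \<bar>(y - c i) \<bullet> b\<bar>) ` Basis)"

lemma depth_pos_iff: "0 < depth i y \<longleftrightarrow> y \<in> cube (c i) (R i)"
  unfolding depth_def cube_def by (subst Min_gr_iff) auto

lemma depth_less_iff: "depth i y < w \<longleftrightarrow> (\<exists>b\<in>Basis. R i - \<bar>(y - c i) \<bullet> b\<bar> < w)"
  unfolding depth_def by (subst Min_less_iff) auto

lemma depth_le_R: "depth i y \<le> R i"
proof -
  obtain b :: 'a where "b \<in> Basis"
    using nonempty_Basis by blast
  then have "depth i y \<le> R i - \<bar>(y - c i) \<bullet> b\<bar>"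
    unfolding depth_def by (intro Min_le) auto
  then show ?thesis
    by linarith
qed

lemma depth_lipschitz: "depth i y - norm (x - y) \<le> depth i x"
proof -
  have "depth i x \<in> (\<lambda>b. R i - \<bar>(x - c i) \<bullet> b\<bar>) ` Basis"
    unfolding depth_def by (rule Min_in) auto
  then obtain b where b: "b \<in> Basis" and depth_x: "depth i x = R i - \<bar>(x - c i) \<bullet> b\<bar>"
    by blast
  have "depth i y \<le> R i - \<bar>(y - c i) \<bullet> b\<bar>"
    unfolding depth_def using b by (intro Min_le) auto
  moreover have "(x - c i) \<bullet> b = (y - c i) \<bullet> b + (x - y) \<bullet> b"
    by (simp add: inner_diff_left)
  moreover have "\<bar>(x - y) \<bullet> b\<bar> \<le> norm (x - y)"
    using b by (rule Basis_le_norm)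
  ultimately show ?thesis
    using depth_x by linarith
qed

text \<open>The slope \<open>1 / (12 d)\<close> makes \<open>scale_at\<close> change by at most \<open>mesh k / 2\<close> over a distance
  \<open>6 d mesh k\<close>, so that close points have levels differing by at most one.\<close>

definition local_scale :: "nat \<Rightarrow> 'a \<Rightarrow> real" where
  "local_scale i y = max 0 (min (R i) (depth i y / (12 * real DIM('a))))"

definition scale_at :: "'a \<Rightarrow> real" where
  "scale_at y = (SUP i. local_scale i y)"

lemma local_scale_le_mesh_0: "local_scale i y \<le> mesh 0"
  unfolding local_scale_def using R_le_mesh_0[of i] mesh_pos[of 0] by auto

lemma local_scale_le_scale_at: "local_scale i y \<le> scale_at y"
  unfolding scale_at_def using local_scale_le_mesh_0 by (intro cSUP_upper bdd_aboveI2) auto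

lemma scale_at_le_mesh_0: "scale_at y \<le> mesh 0"
  unfolding scale_at_def using local_scale_le_mesh_0 by (intro cSUP_least) auto

lemma scale_at_lipschitz: "scale_at y - norm (x - y) / (12 * real DIM('a)) \<le> scale_at x"
proof -
  have local_bound: "local_scale i y - norm (x - y) / (12 * real DIM('a)) \<le> local_scale i x" for i
  proof -
    have "depth i y / (12 * real DIM('a)) - norm (x - y) / (12 * real DIM('a)) \<le> depth i x / (12 * real DIM('a))"
      using depth_lipschitz[of i y x] by (simp add: divide_right_mono flip: diff_divide_distrib)
    moreover have "0 \<le> norm (x - y) / (12 * real DIM('a))"
      by simp
    ultimately show ?thesis
      unfolding local_scale_def by linarith
  qed
  have "scale_at y \<le> scale_at x + norm (x - y) / (12 * real DIM('a))"
    unfolding scale_at_def[of y]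
  proof (rule cSUP_least)
    show "local_scale i y \<le> scale_at x + norm (x - y) / (12 * real DIM('a))" for i
      using local_bound[of i] local_scale_le_scale_at[of i x] by linarith
  qed simp
  then show ?thesis
    by simp
qed

lemma scale_at_pos: "y \<in> A \<Longrightarrow> 0 < scale_at y"
proof -
  assume "y \<in> A"
  then obtain i where "y \<in> cube (c i) (R i)"
    using A_subset_cubes by auto
  then have "0 < depth i y"
    by (simp add: depth_pos_iff)
  then have "0 < local_scale i y"
    unfolding local_scale_def using depth_le_R[of i y] by simp
  then show ?thesis
    using local_scale_le_scale_at[of i y] by linarith
qed

lemma exists_local_scale_gt_half: "0 < scale_at y \<Longrightarrow> \<exists>i. scale_at y / 2 < local_scale i y"
proof (rule ccontr)
  assume "0 < scale_at y" "\<not> (\<exists>i. scale_at y / 2 < local_scale i y)"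
  then have "scale_at y \<le> scale_at y / 2"
    unfolding scale_at_def[of y] by (intro cSUP_least) (auto simp: not_less)
  with \<open>0 < scale_at y\<close> show False
    by simp
qed

definition level :: "'a \<Rightarrow> nat" where
  "level y = (LEAST k. mesh k \<le> scale_at y)"

lemma level_bounds:
  assumes "0 < scale_at y"
  shows "mesh (level y) \<le> scale_at y" "scale_at y < 2 * mesh (level y)"
proof -
  obtain n where "mesh 0 / scale_at y < 2 ^ n"
    using real_arch_pow[of 2 "mesh 0 / scale_at y"] by auto
  then have "mesh n \<le> scale_at y"
    using assms mesh_eq[of n] by (simp add: divide_less_eq mult.commute less_imp_le)
  then show "mesh (level y) \<le> scale_at y"
    unfolding level_def by (rule LeastI)
  show "scale_at y < 2 * mesh (level y)"
  proof (cases "level y")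
    case 0
    then show ?thesis
      using scale_at_le_mesh_0[of y] mesh_pos[of 0] by simp
  next
    case (Suc k)
    then have "\<not> mesh k \<le> scale_at y"
      unfolding level_def by (metis lessI not_less_Least)
    then show ?thesis
      using Suc mesh_Suc[of k] by simp
  qed
qed

lemma level_le_Suc_level:
  assumes "0 < scale_at y" "norm (x - y) \<le> 6 * real DIM('a) * mesh (level y)"
  shows "level x \<le> Suc (level y)"
proof -
  have "norm (x - y) / (12 * real DIM('a)) \<le> mesh (level y) / 2"
    using assms(2) by (simp add: divide_le_eq mult_ac)
  then have "mesh (Suc (level y)) \<le> scale_at x"
    using scale_at_lipschitz[of y x] level_bounds(1)[OF assms(1)] mesh_Suc[of "level y"] by linarith
  then show ?thesis
    unfolding level_def by (rule Least_le)
qed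

definition cell :: "'a \<Rightarrow> nat \<times> ('a \<Rightarrow> int)" where
  "cell y = (level y, grid_index (mesh (level y)) y)"

definition cells :: "(nat \<times> ('a \<Rightarrow> int)) set" where
  "cells = cell ` A"

definition centre :: "nat \<times> ('a \<Rightarrow> int) \<Rightarrow> 'a" where
  "centre F = (SOME y. y \<in> A \<and> cell y = F)"

definition radius :: "nat \<Rightarrow> real" where
  "radius k = 3 * real DIM('a) * mesh k"

definition cell_ball :: "nat \<times> ('a \<Rightarrow> int) \<Rightarrow> 'a \<times> real" where
  "cell_ball F = (centre F, radius (fst F))"

lemma centre_in_cell:
  assumes "F \<in> cells"
  shows "centre F \<in> A" "level (centre F) = fst F" "grid_index (mesh (fst F)) (centre F) = snd F"
proof -
  have "\<exists>y. y \<in> A \<and> cell y = F"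
    using assms unfolding cells_def by auto
  then have "centre F \<in> A \<and> cell (centre F) = F"
    unfolding centre_def by (rule someI_ex)
  then show "centre F \<in> A" "level (centre F) = fst F" "grid_index (mesh (fst F)) (centre F) = snd F"
    unfolding cell_def by (metis fst_conv snd_conv)+
qed

lemma radius_pos: "0 < radius k"
  unfolding radius_def using mesh_pos by simp

lemma radius_le_eps: "radius k \<le> \<epsilon>"
  using mesh_antimono[of 0 k] unfolding radius_def mesh_def[of 0] by (simp add: le_divide_eq mult.commute)

lemma supercovering_cell_balls: "supercovering (cell_ball ` cells) A"
  unfolding supercovering_def
proof
  fix y assume "y \<in> A"
  then have F: "cell y \<in> cells"
    unfolding cells_def by blast
  then have "grid_index (mesh (level y)) (centre (cell y)) = grid_index (mesh (level y)) y"
    using centre_in_cell(3)[OF F] unfolding cell_def by simp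
  then have "norm (centre (cell y) - y) < real DIM('a) * mesh (level y)"
    by (rule norm_diff_less_of_grid_index_eq[OF mesh_pos])
  then have "y \<in> ball (centre (cell y)) (radius (fst (cell y)) / 3)"
    unfolding radius_def cell_def by (simp add: dist_norm)
  then show "y \<in> (\<Union>(x, r) \<in> cell_ball ` cells. ball x (r / 3))"
    using F unfolding cell_ball_def by force
qed

lemma inj_on_cell_ball: "inj_on cell_ball cells"
proof
  fix F G assume F: "F \<in> cells" and G: "G \<in> cells" and eq: "cell_ball F = cell_ball G"
  then have "mesh (fst F) = mesh (fst G)"
    unfolding cell_ball_def radius_def by simp
  then have "fst F = fst G"
    using inj_mesh by (auto dest: injD)
  moreover have "snd F = snd G"
    using eq centre_in_cell(3)[OF F] centre_in_cell(3)[OF G] \<open>fst F = fst G\<close>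
    unfolding cell_ball_def by simp
  ultimately show "F = G"
    by (simp add: prod_eq_iff)
qed

text \<open>Neighbouring cells differ in level by at most one, hence the levels are coloured modulo 3;
  distinct cells of one level and colour are at least \<open>6 d + 1\<close> grid steps apart in some
  coordinate, which exceeds the sum of their radii.\<close>

definition colour :: "nat \<times> ('a \<Rightarrow> int) \<Rightarrow> nat \<times> ('a \<Rightarrow> int)" where
  "colour F = (fst F mod 3, restrict (\<lambda>b. snd F b mod (6 * int DIM('a) + 1)) Basis)"

definition colours :: "(nat \<times> ('a \<Rightarrow> int)) set" where
  "colours = {..<3} \<times> PiE Basis (\<lambda>_. {0..<6 * int DIM('a) + 1})"

lemma colour_in_colours: "colour F \<in> colours"
proof -
  have modulus_pos: "0 < 6 * int DIM('a) + 1"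
    by simp
  have "snd F b mod (6 * int DIM('a) + 1) \<in> {0..<6 * int DIM('a) + 1}" for b
    unfolding atLeastLessThan_iff using pos_mod_bound[OF modulus_pos] pos_mod_sign[OF modulus_pos] by blast
  then show ?thesis
    unfolding colour_def colours_def by (auto simp: PiE_iff)
qed

lemma finite_colours: "finite colours"
  unfolding colours_def by (auto intro!: finite_PiE)

lemma card_colours: "card colours = 3 * (6 * DIM('a) + 1) ^ DIM('a)"
proof -
  have "card (PiE Basis (\<lambda>_::'a. {0..<6 * int DIM('a) + 1})) = (6 * DIM('a) + 1) ^ DIM('a)"
    by (simp add: card_PiE nat_add_distrib nat_mult_distrib)
  then show ?thesis
    unfolding colours_def by (simp add: card_cartesian_product)
qed

lemma same_colour_centres_far:
  assumes F: "F \<in> cells" and G: "G \<in> cells" and same_colour: "colour F = colour G"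
    and "F \<noteq> G" and levels: "fst G \<le> fst F"
  shows "6 * real DIM('a) * mesh (fst G) \<le> norm (centre F - centre G)"
proof (rule ccontr)
  define x y k j where "x = centre F" "y = centre G" "k = fst F" "j = fst G"
  assume "\<not> ?thesis"
  then have near: "norm (x - y) < 6 * real DIM('a) * mesh j"
    unfolding x_y_k_j_def by simp
  have "k \<le> Suc j"
    using level_le_Suc_level[OF scale_at_pos, of y x] near centre_in_cell[OF F] centre_in_cell[OF G]
    unfolding x_y_k_j_def by simp
  moreover have "k mod 3 = j mod 3"
    using same_colour unfolding colour_def x_y_k_j_def by simp
  ultimately have "k = j"
    using levels unfolding x_y_k_j_def by (auto simp: le_Suc_eq mod_Suc split: if_splits)
  then have "grid_index (mesh j) x \<noteq> grid_index (mesh j) y"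
    using \<open>F \<noteq> G\<close> centre_in_cell[OF F] centre_in_cell[OF G] unfolding x_y_k_j_def by (auto simp: prod_eq_iff)
  then have "\<exists>b\<in>Basis. grid_index (mesh j) x b \<noteq> grid_index (mesh j) y b"
    unfolding grid_index_def by (auto simp: fun_eq_iff restrict_def split: if_splits)
  then obtain b where b: "b \<in> Basis" and differ: "grid_index (mesh j) x b \<noteq> grid_index (mesh j) y b"
    by blast
  have "grid_index (mesh j) x b mod (6 * int DIM('a) + 1) = grid_index (mesh j) y b mod (6 * int DIM('a) + 1)"
    using fun_cong[OF arg_cong[OF same_colour, of snd], of b] b centre_in_cell[OF F] centre_in_cell[OF G] \<open>k = j\<close>
    unfolding colour_def x_y_k_j_def by simp
  then have "6 * int DIM('a) + 1 dvd grid_index (mesh j) x b - grid_index (mesh j) y b"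
    by (simp add: mod_eq_dvd_iff)
  then have "\<bar>6 * int DIM('a) + 1\<bar> \<le> \<bar>grid_index (mesh j) x b - grid_index (mesh j) y b\<bar>"
    using differ by (intro dvd_imp_le_int) auto
  then have "6 * int DIM('a) + 1 \<le> \<bar>grid_index (mesh j) x b - grid_index (mesh j) y b\<bar>"
    by simp
  from norm_diff_gt_of_grid_index_far[OF mesh_pos b this]
  show False
    using near by simp
qed

lemma cell_balls_disjoint:
  assumes "F \<in> cells" "G \<in> cells" "colour F = colour G" "F \<noteq> G"
  shows "ball (centre F) (radius (fst F)) \<inter> ball (centre G) (radius (fst G)) = {}"
proof -
  have "radius (fst F) + radius (fst G) \<le> dist (centre F) (centre G)"
    if "F \<in> cells" "G \<in> cells" "colour F = colour G" "F \<noteq> G" "fst G \<le> fst F" for F G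
  proof -
    have "radius (fst F) + radius (fst G) \<le> 6 * real DIM('a) * mesh (fst G)"
      using mesh_antimono[OF \<open>fst G \<le> fst F\<close>] unfolding radius_def by simp
    also have "\<dots> \<le> dist (centre F) (centre G)"
      using same_colour_centres_far[OF that] by (simp add: dist_norm)
    finally show ?thesis .
  qed
  note far = this
  show ?thesis
  proof (cases "fst G \<le> fst F")
    case True
    then show ?thesis
      using far[OF assms] by (intro disjoint_ballI)
  next
    case False
    then have "ball (centre G) (radius (fst G)) \<inter> ball (centre F) (radius (fst F)) = {}"
      using far[OF assms(2,1) assms(3,4)[symmetric]] by (intro disjoint_ballI) auto
    then show ?thesis
      by blast
  qed
qed

lemma disjoint_balls_colour_class: "disjoint_balls (cell_ball ` {F \<in> cells. colour F = \<kappa>})"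
  unfolding disjoint_balls_def
proof (intro ballI impI)
  fix p q assume "p \<in> cell_ball ` {F \<in> cells. colour F = \<kappa>}" "q \<in> cell_ball ` {F \<in> cells. colour F = \<kappa>}" "p \<noteq> q"
  then obtain F G where "F \<in> cells" "G \<in> cells" "colour F = \<kappa>" "colour G = \<kappa>"
    and "p = cell_ball F" "q = cell_ball G"
    by auto
  moreover from this have "F \<noteq> G"
    using \<open>p \<noteq> q\<close> by auto
  ultimately show "ball (fst p) (snd p) \<inter> ball (fst q) (snd q) = {}"
    using cell_balls_disjoint[of F G] unfolding cell_ball_def by simp
qed

definition charged_cube :: "nat \<times> ('a \<Rightarrow> int) \<Rightarrow> nat" where
  "charged_cube F = (SOME i. scale_at (centre F) / 2 < local_scale i (centre F))"

lemma charged_cube_bounds: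
  assumes "F \<in> cells"
  shows "mesh (fst F) < 2 * R (charged_cube F)" "0 < depth (charged_cube F) (centre F)"
    "depth (charged_cube F) (centre F) < 24 * real DIM('a) * mesh (fst F)"
proof -
  define x i k where "x = centre F" "i = charged_cube F" "k = fst F"
  have "0 < scale_at x"
    using scale_at_pos centre_in_cell(1)[OF assms] unfolding x_i_k_def by blast
  then have local_scale: "scale_at x / 2 < local_scale i x"
    unfolding x_i_k_def charged_cube_def by (rule someI_ex[OF exists_local_scale_gt_half])
  have "mesh k \<le> scale_at x" "scale_at x < 2 * mesh k"
    using level_bounds[OF \<open>0 < scale_at x\<close>] centre_in_cell(2)[OF assms] unfolding x_i_k_def by auto
  then have lower: "mesh k / 2 < min (R i) (depth i x / (12 * real DIM('a)))"
    and upper: "min (R i) (depth i x / (12 * real DIM('a))) < 2 * mesh k"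
    using local_scale local_scale_le_scale_at[of i x] mesh_pos[of k]
    unfolding local_scale_def by linarith+
  from lower show "mesh (fst F) < 2 * R (charged_cube F)"
    unfolding x_i_k_def by simp
  from lower have "0 < depth i x / (12 * real DIM('a))"
    using mesh_pos[of k] by linarith
  then show "0 < depth (charged_cube F) (centre F)"
    unfolding x_i_k_def by (simp add: zero_less_divide_iff)
  have "depth i x < 24 * real DIM('a) * mesh k"
  proof (cases "R i < 2 * mesh k")
    case True
    moreover have "2 \<le> 24 * real DIM('a)"
      using real_DIM_ge_1[where 'a = 'a] by linarith
    then have "2 * mesh k \<le> 24 * real DIM('a) * mesh k"
      using mult_right_mono less_imp_le[OF mesh_pos] by blast
    ultimately show ?thesis
      using depth_le_R[of i x] by linarith
  next
    case False
    with upper have "depth i x / (12 * real DIM('a)) < 2 * mesh k"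
      by linarith
    then show ?thesis
      by (simp add: divide_less_eq mult_ac)
  qed
  then show "depth (charged_cube F) (centre F) < 24 * real DIM('a) * mesh (fst F)"
    unfolding x_i_k_def .
qed

definition cube_span :: "nat \<Rightarrow> nat \<Rightarrow> 'a \<Rightarrow> int set" where
  "cube_span i k b = {\<lfloor>(c i \<bullet> b - R i) / mesh k\<rfloor>..\<lfloor>(c i \<bullet> b + R i) / mesh k\<rfloor>}"

definition face_span :: "nat \<Rightarrow> nat \<Rightarrow> 'a \<Rightarrow> int set" where
  "face_span i k b =
     {\<lfloor>(c i \<bullet> b - R i) / mesh k\<rfloor>..\<lfloor>(c i \<bullet> b - R i) / mesh k\<rfloor> + 24 * int DIM('a)} \<union>
     {\<lfloor>(c i \<bullet> b + R i) / mesh k\<rfloor> - 24 * int DIM('a)..\<lfloor>(c i \<bullet> b + R i) / mesh k\<rfloor>}"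

definition boundary_cells :: "nat \<Rightarrow> nat \<Rightarrow> ('a \<Rightarrow> int) set" where
  "boundary_cells i k =
     (if mesh k < 2 * R i
      then (\<Union>b\<in>Basis. PiE Basis (\<lambda>b'. if b' = b then face_span i k b else cube_span i k b'))
      else {})"

lemma grid_index_in_boundary_cells:
  assumes "F \<in> cells"
  shows "snd F \<in> boundary_cells (charged_cube F) (fst F)"
proof -
  define x i k where "x = centre F" "i = charged_cube F" "k = fst F"
  have index: "snd F = grid_index (mesh k) x"
    using centre_in_cell(3)[OF assms] unfolding x_i_k_def by simp
  have inside: "c i \<bullet> b - R i \<le> x \<bullet> b" "x \<bullet> b \<le> c i \<bullet> b + R i" if "b \<in> Basis" for b
    using charged_cube_bounds(2)[OF assms] that unfolding depth_pos_iff cube_def x_i_k_def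
    by (auto simp: inner_diff_left abs_less_iff)
  then have in_cube_span: "grid_index (mesh k) x b \<in> cube_span i k b" if "b \<in> Basis" for b
    unfolding grid_index_def cube_span_def using that mesh_pos[of k]
    by (auto intro!: floor_mono divide_right_mono)
  obtain b where b: "b \<in> Basis" and near_face: "R i - \<bar>(x - c i) \<bullet> b\<bar> < 24 * real DIM('a) * mesh k"
    using charged_cube_bounds(3)[OF assms] unfolding depth_less_iff x_i_k_def by blast
  have "x \<bullet> b - (c i \<bullet> b - R i) \<le> of_int (24 * int DIM('a)) * mesh k \<or>
      (c i \<bullet> b + R i) - x \<bullet> b \<le> of_int (24 * int DIM('a)) * mesh k"
    using near_face by (auto simp: inner_diff_left abs_if split: if_split_asm)
  then have "\<lfloor>(x \<bullet> b) / mesh k\<rfloor> \<in> face_span i k b"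
    unfolding face_span_def using inside[OF b] by (intro floor_divide_mem_near_ends[OF mesh_pos])
  then have "grid_index (mesh k) x b \<in> face_span i k b"
    unfolding grid_index_def using b by simp
  with in_cube_span b have "grid_index (mesh k) x \<in> PiE Basis (\<lambda>b'. if b' = b then face_span i k b else cube_span i k b')"
    by (auto simp: PiE_iff grid_index_def)
  then show ?thesis
    using charged_cube_bounds(1)[OF assms] b index unfolding boundary_cells_def x_i_k_def by auto
qed

lemma finite_boundary_cells: "finite (boundary_cells i k)"
  unfolding boundary_cells_def cube_span_def face_span_def by (auto intro!: finite_PiE)

lemma card_cube_span_le: "real (card (cube_span i k b)) \<le> 2 * R i / mesh k + 2"
proof -
  have "real (card (cube_span i k b)) \<le> (c i \<bullet> b + R i) / mesh k - (c i \<bullet> b - R i) / mesh k + 2"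
    unfolding cube_span_def using R_nonneg[of i] mesh_pos[of k]
    by (intro card_floor_interval_le divide_right_mono) auto
  also have "\<dots> = 2 * R i / mesh k + 2"
    by (simp add: diff_divide_distrib add_divide_distrib)
  finally show ?thesis .
qed

lemma card_face_span_le: "card (face_span i k b) \<le> 48 * DIM('a) + 2"
proof -
  have "card (face_span i k b) \<le> nat (24 * int DIM('a) + 1) + nat (24 * int DIM('a) + 1)"
    unfolding face_span_def by (rule order.trans[OF card_Un_le]) simp
  then show ?thesis
    by (simp add: nat_add_distrib nat_mult_distrib)
qed

lemma card_boundary_cells_le:
  assumes "mesh k < 2 * R i"
  shows "real (card (boundary_cells i k))
    \<le> real DIM('a) * (48 * real DIM('a) + 2) * (6 * R i / mesh k) ^ (DIM('a) - 1)"
proof -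
  define q where "q = 6 * R i / mesh k"
  have card_cube_span: "real (card (cube_span i k b)) \<le> q" for b
    using card_cube_span_le[of i k b] assms mesh_pos[of k] unfolding q_def by (simp add: field_simps)
  have "real (card (PiE Basis (\<lambda>b'. if b' = b then face_span i k b else cube_span i k b')))
      \<le> (48 * real DIM('a) + 2) * q ^ (DIM('a) - 1)" if "b \<in> Basis" for b
  proof -
    have "real (card (PiE Basis (\<lambda>b'. if b' = b then face_span i k b else cube_span i k b')))
        \<le> real (card (face_span i k b)) * q ^ (DIM('a) - 1)"
      by (rule card_PiE_update_le[OF finite_Basis that card_cube_span])
    also have "\<dots> \<le> (48 * real DIM('a) + 2) * q ^ (DIM('a) - 1)"
      using card_face_span_le[of i k b] R_nonneg[of i] mesh_pos[of k] unfolding q_def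
      by (intro mult_right_mono) auto
    finally show ?thesis .
  qed
  moreover have "card (boundary_cells i k)
      \<le> (\<Sum>b\<in>Basis. card (PiE Basis (\<lambda>b'. if b' = b then face_span i k b else cube_span i k b')))"
    unfolding boundary_cells_def using assms by (simp add: card_UN_le)
  ultimately have "real (card (boundary_cells i k)) \<le> (\<Sum>b\<in>(Basis::'a set). (48 * real DIM('a) + 2) * q ^ (DIM('a) - 1))"
    by (smt (verit) of_nat_le_iff of_nat_sum sum_mono)
  then show ?thesis
    unfolding q_def by simp
qed

lemma card_boundary_cells_mult_radius_powr_le:
  assumes "mesh k < 2 * R i"
  shows "real (card (boundary_cells i k)) * radius k powr \<alpha>
    \<le> real DIM('a) * (48 * real DIM('a) + 2) * 6 ^ (DIM('a) - 1) * (3 * real DIM('a)) powr \<alpha>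
      * R i ^ (DIM('a) - 1) * mesh k powr (\<alpha> - (real DIM('a) - 1))"
proof -
  define n where "n = DIM('a) - 1"
  have "real n = real DIM('a) - 1"
    unfolding n_def using DIM_positive[where 'a = 'a] by (simp add: of_nat_diff)
  then have "mesh k ^ n * mesh k powr (\<alpha> - (real DIM('a) - 1)) = mesh k powr \<alpha>"
    using mesh_pos[of k] by (simp add: powr_realpow[symmetric] flip: powr_add)
  then have radius_powr: "radius k powr \<alpha>
      = (3 * real DIM('a)) powr \<alpha> * (mesh k ^ n * mesh k powr (\<alpha> - (real DIM('a) - 1)))"
    using mesh_pos[of k] by (simp add: radius_def powr_mult)
  have "real (card (boundary_cells i k)) * radius k powr \<alpha>
      \<le> real DIM('a) * (48 * real DIM('a) + 2) * (6 * R i / mesh k) ^ n * radius k powr \<alpha>"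
    using card_boundary_cells_le[OF assms] unfolding n_def by (intro mult_right_mono) auto
  also have "\<dots> = real DIM('a) * (48 * real DIM('a) + 2) * 6 ^ n * (3 * real DIM('a)) powr \<alpha>
      * R i ^ n * mesh k powr (\<alpha> - (real DIM('a) - 1))"
    unfolding radius_powr using mesh_pos[of k] by (simp add: power_divide power_mult_distrib)
  finally show ?thesis
    unfolding n_def .
qed

end

section \<open>Bounding the colour classes\<close>

definition split_supercovering ::
    "'a::metric_space set \<Rightarrow> real \<Rightarrow> real \<Rightarrow> nat \<Rightarrow> real \<Rightarrow> ('a \<times> real) set \<Rightarrow> bool" where
  "split_supercovering A \<epsilon> \<alpha> N M \<B> \<longleftrightarrow>
     supercovering \<B> A \<and>
     (\<forall>(x, r) \<in> \<B>. x \<in> A \<and> 0 < r \<and> r \<le> \<epsilon>) \<and>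
     (\<exists>\<B>s :: nat \<Rightarrow> ('a \<times> real) set.
        \<B> = (\<Union>j<N. \<B>s j) \<and>
        (\<forall>i<N. \<forall>j<N. i \<noteq> j \<longrightarrow> \<B>s i \<inter> \<B>s j = {}) \<and>
        (\<forall>j<N. disjoint_balls (\<B>s j) \<and> (\<Sum>\<^sub>\<infinity>(x, r) \<in> \<B>s j. ennreal (r powr \<alpha>)) \<le> ennreal M))"

definition cell_sum_const :: "nat \<Rightarrow> real \<Rightarrow> real" where
  "cell_sum_const d \<alpha> = real d * (48 * real d + 2) * 6 ^ (d - 1) * (3 * real d) powr \<alpha> *
     2 powr (\<alpha> - (real d - 1)) / (1 - 2 powr - (\<alpha> - (real d - 1)))"

lemma cell_sum_const_pos:
  assumes "0 < d" "real d - 1 < \<alpha>"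
  shows "0 < cell_sum_const d \<alpha>"
proof -
  have "2 powr - (\<alpha> - (real d - 1)) < 1"
    using assms(2) by (simp add: powr_less_one)
  then show ?thesis
    unfolding cell_sum_const_def using assms(1) by (intro divide_pos_pos mult_pos_pos) auto
qed

definition supercovering_const :: "nat \<Rightarrow> real \<Rightarrow> real" where
  "supercovering_const d \<alpha> = cell_sum_const d \<alpha> * cube_cover_const \<alpha>"

lemma supercovering_const_pos:
  assumes "real DIM('a::euclidean_space) - 1 < \<alpha>"
  shows "0 < supercovering_const DIM('a) \<alpha>"
proof -
  have "0 < \<alpha>"
    using assms real_DIM_ge_1[where 'a = 'a] by linarith
  then show ?thesis
    unfolding supercovering_const_def using assms
    by (auto intro!: mult_pos_pos cell_sum_const_pos cube_cover_const_pos)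
qed

locale cube_cover_sum = cube_cover +
  fixes \<alpha> S :: real
  assumes alpha_gt: "real DIM('a) - 1 < \<alpha>"
    and sum_R_powr_le: "\<And>I. finite I \<Longrightarrow> (\<Sum>i\<in>I. R i powr \<alpha>) \<le> S"
begin

lemma sum_boundary_cells_le:
  assumes "finite L"
  shows "(\<Sum>k\<in>L. real (card (boundary_cells i k)) * radius k powr \<alpha>) \<le> cell_sum_const DIM('a) \<alpha> * R i powr \<alpha>"
proof (cases "R i = 0")
  case True
  then have "boundary_cells i k = {}" for k
    using mesh_pos[of k] unfolding boundary_cells_def by simp
  then show ?thesis
    using True by simp
next
  case False
  then have R_pos: "0 < R i"
    using R_nonneg[of i] by simp
  define n \<beta> where "n = DIM('a) - 1" "\<beta> = \<alpha> - (real DIM('a) - 1)"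
  have \<alpha>_eq: "\<alpha> = real n + \<beta>"
    unfolding n_\<beta>_def using DIM_positive[where 'a = 'a] by (simp add: of_nat_diff)
  have \<beta>_pos: "0 < \<beta>"
    unfolding n_\<beta>_def using alpha_gt by simp
  define G where "G = real DIM('a) * (48 * real DIM('a) + 2) * 6 ^ n * (3 * real DIM('a)) powr \<alpha> * R i ^ n"
  have G_nonneg: "0 \<le> G"
    unfolding G_def using R_pos by simp
  have term_le: "real (card (boundary_cells i k)) * radius k powr \<alpha>
      \<le> G * (if mesh k < 2 * R i then mesh k powr \<beta> else 0)" for k
    using card_boundary_cells_mult_radius_powr_le[of k i]
    unfolding G_def n_\<beta>_def boundary_cells_def by (cases "mesh k < 2 * R i") auto
  have geometric: "(\<Sum>k\<in>L. if mesh k < 2 * R i then mesh k powr \<beta> else 0) \<le> (2 * R i) powr \<beta> / (1 - 2 powr - \<beta>)"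
    using sum_dyadic_powr_le[OF mesh_pos[of 0] \<beta>_pos assms, of "2 * R i"] by (simp only: mesh_eq[symmetric])
  have "(\<Sum>k\<in>L. real (card (boundary_cells i k)) * radius k powr \<alpha>)
      \<le> (\<Sum>k\<in>L. G * (if mesh k < 2 * R i then mesh k powr \<beta> else 0))"
    by (intro sum_mono term_le)
  also have "\<dots> \<le> G * ((2 * R i) powr \<beta> / (1 - 2 powr - \<beta>))"
    unfolding sum_distrib_left[symmetric] using geometric G_nonneg by (rule mult_left_mono)
  also have "\<dots> = real DIM('a) * (48 * real DIM('a) + 2) * 6 ^ n * (3 * real DIM('a)) powr \<alpha>
      * (R i ^ n * (2 * R i) powr \<beta>) / (1 - 2 powr - \<beta>)"
    unfolding G_def by simp
  also have "R i ^ n * (2 * R i) powr \<beta> = 2 powr \<beta> * R i powr \<alpha>"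
    unfolding \<alpha>_eq using R_pos by (simp add: powr_mult powr_add powr_realpow)
  also have "real DIM('a) * (48 * real DIM('a) + 2) * 6 ^ n * (3 * real DIM('a)) powr \<alpha>
      * (2 powr \<beta> * R i powr \<alpha>) / (1 - 2 powr - \<beta>) = cell_sum_const DIM('a) \<alpha> * R i powr \<alpha>"
    unfolding cell_sum_const_def n_\<beta>_def by simp
  finally show ?thesis .
qed

lemma sum_cells_radius_powr_le:
  assumes "finite G" "G \<subseteq> cells"
  shows "(\<Sum>F\<in>G. radius (fst F) powr \<alpha>) \<le> cell_sum_const DIM('a) \<alpha> * S"
proof -
  have "(\<Sum>F\<in>G. radius (fst F) powr \<alpha>) = (\<Sum>i\<in>charged_cube ` G. \<Sum>F\<in>{F\<in>G. charged_cube F = i}. radius (fst F) powr \<alpha>)"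
    by (rule sum.image_gen[OF assms(1)])
  also have "\<dots> \<le> (\<Sum>i\<in>charged_cube ` G. cell_sum_const DIM('a) \<alpha> * R i powr \<alpha>)"
  proof (rule sum_mono)
    fix i
    have "{F\<in>G. charged_cube F = i} \<subseteq> Sigma (fst ` G) (boundary_cells i)"
      using grid_index_in_boundary_cells assms(2) by (force simp: mem_Times_iff)
    then have "(\<Sum>F\<in>{F\<in>G. charged_cube F = i}. radius (fst F) powr \<alpha>)
        \<le> (\<Sum>F\<in>Sigma (fst ` G) (boundary_cells i). radius (fst F) powr \<alpha>)"
      using assms(1) finite_boundary_cells by (intro sum_mono2) auto
    also have "\<dots> = (\<Sum>(k, z)\<in>Sigma (fst ` G) (boundary_cells i). radius k powr \<alpha>)"
      by (simp add: case_prod_unfold)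
    also have "\<dots> = (\<Sum>k\<in>fst ` G. \<Sum>z\<in>boundary_cells i k. radius k powr \<alpha>)"
      using assms(1) finite_boundary_cells by (intro sum.Sigma[symmetric]) auto
    also have "\<dots> = (\<Sum>k\<in>fst ` G. real (card (boundary_cells i k)) * radius k powr \<alpha>)"
      by simp
    also have "\<dots> \<le> cell_sum_const DIM('a) \<alpha> * R i powr \<alpha>"
      using assms(1) by (intro sum_boundary_cells_le) simp
    finally show "(\<Sum>F\<in>{F\<in>G. charged_cube F = i}. radius (fst F) powr \<alpha>) \<le> cell_sum_const DIM('a) \<alpha> * R i powr \<alpha>" .
  qed
  also have "\<dots> = cell_sum_const DIM('a) \<alpha> * (\<Sum>i\<in>charged_cube ` G. R i powr \<alpha>)"
    by (simp add: sum_distrib_left)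
  also have "\<dots> \<le> cell_sum_const DIM('a) \<alpha> * S"
    using sum_R_powr_le[of "charged_cube ` G"] assms(1) cell_sum_const_pos[OF DIM_positive alpha_gt]
    by (intro mult_left_mono) auto
  finally show ?thesis .
qed

lemma infsum_colour_class_le:
  "(\<Sum>\<^sub>\<infinity>(x, r) \<in> cell_ball ` {F \<in> cells. colour F = \<kappa>}. ennreal (r powr \<alpha>))
    \<le> ennreal (cell_sum_const DIM('a) \<alpha> * S)"
proof -
  have "inj_on cell_ball {F \<in> cells. colour F = \<kappa>}"
    using inj_on_cell_ball by (rule inj_on_subset) auto
  then have "(\<Sum>\<^sub>\<infinity>(x, r) \<in> cell_ball ` {F \<in> cells. colour F = \<kappa>}. ennreal (r powr \<alpha>))
      = (\<Sum>\<^sub>\<infinity>F \<in> {F \<in> cells. colour F = \<kappa>}. ennreal (radius (fst F) powr \<alpha>))"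
    by (subst infsum_reindex) (simp_all add: o_def cell_ball_def)
  also have "\<dots> \<le> ennreal (cell_sum_const DIM('a) \<alpha> * S)"
    using sum_cells_radius_powr_le by (intro infsum_ennreal_le_if_sums_le) auto
  finally show ?thesis .
qed

lemma exists_coloured_supercovering:
  "\<exists>\<B>. split_supercovering A \<epsilon> \<alpha> (3 * (6 * DIM('a) + 1) ^ DIM('a)) (cell_sum_const DIM('a) \<alpha> * S) \<B>"
proof -
  have colour_range: "colour ` cells \<subseteq> colours"
    using colour_in_colours by blast
  obtain Bs where union: "cell_ball ` cells = (\<Union>j<card colours. Bs j)"
    and disjoint: "\<And>i j. i < card colours \<Longrightarrow> j < card colours \<Longrightarrow> i \<noteq> j \<Longrightarrow> Bs i \<inter> Bs j = {}"
    and classes: "\<And>j. \<exists>\<kappa>. Bs j = cell_ball ` {F \<in> cells. colour F = \<kappa>}"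
    using partition_by_finite_colouring[OF finite_colours colour_range inj_on_cell_ball] by blast
  show ?thesis
    unfolding split_supercovering_def card_colours[symmetric]
  proof (intro exI[of _ "cell_ball ` cells"] exI[of _ Bs] conjI allI impI)
    show "supercovering (cell_ball ` cells) A"
      by (rule supercovering_cell_balls)
    show "\<forall>(x, r) \<in> cell_ball ` cells. x \<in> A \<and> 0 < r \<and> r \<le> \<epsilon>"
      using centre_in_cell(1) radius_pos radius_le_eps unfolding cell_ball_def by auto
    show "cell_ball ` cells = (\<Union>j<card colours. Bs j)"
      by (rule union)
    show "Bs i \<inter> Bs j = {}" if "i < card colours" "j < card colours" "i \<noteq> j" for i j
      using disjoint that .
    fix j
    obtain \<kappa> where "Bs j = cell_ball ` {F \<in> cells. colour F = \<kappa>}"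
      using classes by blast
    then show "disjoint_balls (Bs j)"
      and "(\<Sum>\<^sub>\<infinity>(x, r) \<in> Bs j. ennreal (r powr \<alpha>)) \<le> ennreal (cell_sum_const DIM('a) \<alpha> * S)"
      using disjoint_balls_colour_class infsum_colour_class_le by simp_all
  qed
qed

end

theorem split_supercovering_of_hausdorff_measure_less:
  fixes A :: "'a::euclidean_space set"
  assumes "real DIM('a) - 1 < \<alpha>" "0 < a" "hausdorff_measure \<alpha> A < ennreal a" "0 < \<epsilon>"
  shows "\<exists>\<B>. split_supercovering A \<epsilon> \<alpha> (3 * (6 * DIM('a) + 1) ^ DIM('a)) (supercovering_const DIM('a) \<alpha> * a) \<B>"
proof -
  have "0 < \<alpha>"
    using assms(1) real_DIM_ge_1[where 'a = 'a] by linarith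
  have "0 < \<epsilon> / (3 * real DIM('a))"
    using assms(4) by simp
  obtain c :: "nat \<Rightarrow> 'a" and R :: "nat \<Rightarrow> real" where "A \<subseteq> (\<Union>i. cube (c i) (R i))"
    "\<And>i. 0 \<le> R i" "\<And>i. R i \<le> \<epsilon> / (3 * real DIM('a))" "\<And>I. finite I \<Longrightarrow> (\<Sum>i\<in>I. R i powr \<alpha>) \<le> cube_cover_const \<alpha> * a"
    using cube_cover_of_hausdorff_measure_less[OF \<open>0 < \<alpha>\<close> assms(2) \<open>0 < \<epsilon> / (3 * real DIM('a))\<close> assms(3)]
    by auto
  then interpret cube_cover_sum A c R \<epsilon> \<alpha> "cube_cover_const \<alpha> * a"
    using assms(1,4) by unfold_locales simp_all
  show ?thesis
    using exists_coloured_supercovering by (simp add: supercovering_const_def mult.assoc)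
qed

theorem lemma6:
  "\<exists>C1::nat. C1 > 0 \<and>
     (\<forall>\<alpha>::real. real DIM('a::euclidean_space) - 1 < \<alpha> \<and> \<alpha> \<le> real DIM('a) \<longrightarrow>
       (\<exists>C2::real. C2 > 0 \<and>
         (\<forall>(A::'a set) (a::real) (\<epsilon>::real).
            bounded A \<and> a > 0 \<and> hausdorff_measure \<alpha> A < ennreal a \<and> \<epsilon> > 0 \<longrightarrow>
            (\<exists>\<B>::('a \<times> real) set.
               supercovering \<B> A \<and>
               (\<forall>(x, r) \<in> \<B>. x \<in> A \<and> 0 < r \<and> r \<le> \<epsilon>) \<and>
               (\<exists>\<B>s :: nat \<Rightarrow> ('a \<times> real) set.
                  \<B> = (\<Union>j<C1. \<B>s j) \<and>
                  (\<forall>i<C1. \<forall>j<C1. i \<noteq> j \<longrightarrow> \<B>s i \<inter> \<B>s j = {}) \<and>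
                  (\<forall>j<C1. disjoint_balls (\<B>s j) \<and>
                     (\<Sum>\<^sub>\<infinity>(x, r) \<in> \<B>s j. ennreal (r powr \<alpha>)) \<le> ennreal (C2 * a)))))))"
proof (intro exI[of _ "3 * (6 * DIM('a) + 1) ^ DIM('a)"] conjI allI impI, goal_cases)
  case 1
  show ?case
    by simp
next
  case (2 \<alpha>)
  then have "real DIM('a) - 1 < \<alpha>"
    by simp
  show ?case
  proof (intro exI[of _ "supercovering_const DIM('a) \<alpha>"] conjI allI impI)
    show "0 < supercovering_const DIM('a) \<alpha>"
      using \<open>real DIM('a) - 1 < \<alpha>\<close> by (rule supercovering_const_pos)
  qed (rule split_supercovering_of_hausdorff_measure_less[OF \<open>real DIM('a) - 1 < \<alpha>\<close>,
      unfolded split_supercovering_def], simp_all)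
qed

end
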